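(* Let $n,k\ge1$, $\mathbf{k}=(k,k,\dots,k)$ ($n$ entries), and $D\in\mathcal{D}_{\mathbf{k}}$. Then the Walking Algorithm on $(T(D),R(D))$ terminates only after it marks the smallest rank-$1$ box (the box of rank $1$ with the smallest index) and writes down its index; i.e. the last box marked is the smallest rank-$1$ box.
   Context: $N=n+nk$. $\mathcal{D}_{\mathbf{k}}$: sequences $(a_1,\dots,a_N)$ whose positive entries are the $n$ entries $k$, other entries $-1$, all partial sums $a_1+\cdots+a_{i-1}\ge0$. SW-word: $S^{k}$ for an up step, $W$ for $-1$. Filling Algorithm producing $T(D)$: $n$ columns, each with $k+1$ cells; place $1$ at top of column 1; having placed $1,\dots,i-1$, the lowest filled entry of a column is active if not in row $k+1$; if the $i$-th letter is $W$ place $i$ below the smallest active entry, otherwise at the top of the leftmost empty column; continue until $1,\dots,N$ placed. Entries of $T(D)$ are indices. Ranking Algorithm producing $R(D)$: ranks $0,\dots,k$ to column-1 indices top to bottom; for $i=2,\dots,n$, if the top index of column $i$ is $A+1$ and index $A$ has rank $a$, column $i$ gets ranks $a,\dots,a+k$ top to bottom. Among boxes of equal rank, the largest (smallest) is the one with largest (smallest) index. Walking Algorithm: go to the largest rank-$0$ box, mark it, write its index. Repeat: if the current box is in row 1, let $r$ be the rank of the bottom box of its column; otherwise let $r$ be the rank of the box directly above. If an unmarked box of rank $r$ exists, go to the unmarked rank-$r$ box with largest index, mark it and write its index; otherwise stop. *)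

theory Defs
  imports Main
begin

text \<open>Boxes are pairs (column, row), columns 1..n, rows 1..k+1 (row 1 = top).
  A tableau is a function T :: nat \<Rightarrow> nat \<Rightarrow> nat, T c r = index in box (c,r),
  with 0 meaning the box is empty (indices are 1..N).\<close>

type_synonym tableau = "nat \<Rightarrow> nat \<Rightarrow> nat"
type_synonym box = "nat \<times> nat"

definition Dk :: "nat \<Rightarrow> nat \<Rightarrow> int list set" where
  "Dk n k = {a. length a = n + n * k \<and> (\<forall>x\<in>set a. x = int k \<or> x = -1)
              \<and> length (filter (\<lambda>x. x = int k) a) = n
              \<and> (\<forall>i. 1 \<le> i \<and> i \<le> length a \<longrightarrow> sum_list (take (i - 1) a) \<ge> 0)}"

definition boxes :: "nat \<Rightarrow> nat \<Rightarrow> box set" where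
  "boxes n k = {1..n} \<times> {1..k+1}"

definition col_nonempty :: "nat \<Rightarrow> tableau \<Rightarrow> nat \<Rightarrow> bool" where
  "col_nonempty k T c \<longleftrightarrow> (\<exists>r\<in>{1..k+1}. T c r \<noteq> 0)"

definition lowest_row :: "nat \<Rightarrow> tableau \<Rightarrow> nat \<Rightarrow> nat" where
  "lowest_row k T c = Max {r\<in>{1..k+1}. T c r \<noteq> 0}"

definition active_cols :: "nat \<Rightarrow> nat \<Rightarrow> tableau \<Rightarrow> nat set" where
  "active_cols n k T = {c\<in>{1..n}. col_nonempty k T c \<and> lowest_row k T c \<noteq> k + 1}"

definition fill_step :: "nat \<Rightarrow> nat \<Rightarrow> tableau \<Rightarrow> nat \<Rightarrow> int \<Rightarrow> tableau" where
  "fill_step n k T i x =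
     (if x = -1 then
        (let c = ARG_MIN (\<lambda>c. T c (lowest_row k T c)) c. c \<in> active_cols n k T
         in T(c := (T c)(lowest_row k T c + 1 := i)))
      else
        (let c = LEAST c. c \<in> {1..n} \<and> \<not> col_nonempty k T c
         in T(c := (T c)(1 := i))))"

definition fill_init :: tableau where
  "fill_init = (\<lambda>c r. if c = 1 \<and> r = 1 then 1 else 0)"

text \<open>T(D): index i (2 \<le> i \<le> N) is placed according to the i-th letter, i.e. a_i
  (W iff a_i = -1, S iff a_i = k).\<close>
definition fillT :: "nat \<Rightarrow> nat \<Rightarrow> int list \<Rightarrow> tableau" where
  "fillT n k a = foldl (\<lambda>T i. fill_step n k T i (a ! (i - 1))) fill_init [2..<length a + 1]"

definition pos_of :: "nat \<Rightarrow> nat \<Rightarrow> tableau \<Rightarrow> nat \<Rightarrow> box" where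
  "pos_of n k T i = (THE b. b \<in> boxes n k \<and> T (fst b) (snd b) = i)"

definition top_rank :: "nat \<Rightarrow> nat \<Rightarrow> tableau \<Rightarrow> nat \<Rightarrow> nat" where
  "top_rank n k T = foldl (\<lambda>f c. f(c := (let b = pos_of n k T (T c 1 - 1)
                                             in f (fst b) + (snd b - 1))))
                          (\<lambda>_. 0) [2..<n+1]"

definition rankR :: "nat \<Rightarrow> nat \<Rightarrow> tableau \<Rightarrow> box \<Rightarrow> nat" where
  "rankR n k T b = top_rank n k T (fst b) + (snd b - 1)"

definition idx :: "tableau \<Rightarrow> box \<Rightarrow> nat" where
  "idx T b = T (fst b) (snd b)"

definition walk_start :: "nat \<Rightarrow> nat \<Rightarrow> tableau \<Rightarrow> box" where
  "walk_start n k T = (ARG_MAX (idx T) b. b \<in> boxes n k \<and> rankR n k T b = 0)"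

definition walk_next :: "nat \<Rightarrow> nat \<Rightarrow> tableau \<Rightarrow> box \<Rightarrow> box set \<Rightarrow> box option" where
  "walk_next n k T cur marked =
     (let r = (if snd cur = 1 then rankR n k T (fst cur, k + 1)
               else rankR n k T (fst cur, snd cur - 1));
          C = {b\<in>boxes n k. rankR n k T b = r \<and> b \<notin> marked}
      in if C = {} then None else Some (ARG_MAX (idx T) b. b \<in> C))"

fun walk_iter :: "nat \<Rightarrow> nat \<Rightarrow> tableau \<Rightarrow> nat \<Rightarrow> box list \<Rightarrow> box list" where
  "walk_iter n k T 0 vs = vs"
| "walk_iter n k T (Suc f) vs =
     (case walk_next n k T (last vs) (set vs) of
        None \<Rightarrow> vs
      | Some b \<Rightarrow> walk_iter n k T f (vs @ [b]))"

definition walk :: "nat \<Rightarrow> nat \<Rightarrow> tableau \<Rightarrow> box list" where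
  "walk n k T = walk_iter n k T (n * (k + 1)) [walk_start n k T]"

definition smallest_rank1 :: "nat \<Rightarrow> nat \<Rightarrow> tableau \<Rightarrow> box" where
  "smallest_rank1 n k T = (ARG_MIN (idx T) b. b \<in> boxes n k \<and> rankR n k T b = 1)"

end

(*
  Let D start with j letters S followed by a W. The Filling Algorithm puts 1, ..., j at the top
  of columns 1, ..., j and the index j + 1 directly below 1, into box (1, 2); all other boxes
  receive larger indices. The top boxes of columns 1, ..., j have rank 0, so (1, 2), of rank 1,
  is the smallest rank-1 box.

  The walk marks distinct boxes and stops at a box L once all boxes of the rank looked up from L
  are marked. The look-up map (the box above, cyclically within the column) is a bijection, and
  each step turns a looked-up rank into the rank of the next box; counting ranks along the walk
  therefore shows that it can only stop after exhausting rank 0, where it started, and that by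
  then every box whose looked-up box has rank 0, in particular (1, 2), is marked. So L has
  rank 1, and if L were not (1, 2), the greedy choice of the largest index would have marked L
  instead of (1, 2).
*)
theory Submission
  imports Defs
begin

lemma arg_max_nat_finite:
  fixes f :: "'a \<Rightarrow> nat"
  assumes "finite {x. P x}" and "P x"
  shows "P (ARG_MAX f b. P b)" and "P y \<Longrightarrow> f y \<le> f (ARG_MAX f b. P b)"
proof -
  have "\<forall>y. P y \<longrightarrow> f y < Suc (Max (f ` {x. P x}))"
    using assms(1) by (simp add: le_imp_less_Suc)
  note arg_max_nat_lemma[of P, OF assms(2) this]
  then show "P (ARG_MAX f b. P b)" and "P y \<Longrightarrow> f y \<le> f (ARG_MAX f b. P b)"
    by blast+
qed

lemma foldl_fun_upd_notin:
  "c \<notin> set xs \<Longrightarrow> foldl (\<lambda>f x. f(x := H f x)) g xs c = g c"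
  by (induction xs arbitrary: g) auto

lemma foldl_fun_upd_fixed:
  "(\<And>x. x \<in> set xs \<Longrightarrow> H g x = g x) \<Longrightarrow> foldl (\<lambda>f x. f(x := H f x)) g xs = g"
  by (induction xs) auto

lemma map_butlast_snoc_last: "xs \<noteq> [] \<Longrightarrow> map f xs = map f (butlast xs) @ [f (last xs)]"
  by (induction xs) auto

lemma count_list_map_distinct:
  "distinct xs \<Longrightarrow> count_list (map f xs) y = card {x \<in> set xs. f x = y}"
  by (simp add: count_list_eq_length_filter filter_map o_def distinct_length_filter
      Collect_conj_eq Int_commute eq_commute)

lemma card_inj_endo_preimage_le:
  assumes "finite B" and "inj_on \<phi> B" and "\<phi> ` B \<subseteq> B"
  shows "card {b\<in>B. P (\<phi> b)} \<le> card {b\<in>B. P b}"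
proof -
  have "card {b\<in>B. P (\<phi> b)} = card (\<phi> ` {b\<in>B. P (\<phi> b)})"
    by (rule card_image[symmetric]) (rule inj_on_subset[OF assms(2)], blast)
  also have "\<dots> \<le> card {b\<in>B. P b}"
    using assms(1,3) by (intro card_mono) auto
  finally show ?thesis .
qed

text \<open>The rank \<rho> looked up from the last box occurs among the ranks R (\<phi> b) of the boxes b of vs
  once more than among the ranks R b of the boxes after the first. As \<phi> is injective and all
  boxes of rank \<rho> are visited, this forces vs to start at rank \<rho>, with equality in every count.\<close>
lemma stuck_walk_counting:
  fixes R :: "'a \<Rightarrow> 'b" and \<phi> :: "'a \<Rightarrow> 'a"
  assumes "finite B" and "inj_on \<phi> B" and "\<phi> ` B \<subseteq> B"
    and "distinct vs" and "set vs \<subseteq> B" and "vs \<noteq> []"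
    and steps: "map R (tl vs) = map (R \<circ> \<phi>) (butlast vs)"
    and stuck: "{b\<in>B. R b = R (\<phi> (last vs))} \<subseteq> set vs"
  shows "R (\<phi> (last vs)) = R (hd vs)" and "{b\<in>B. R (\<phi> b) = R (hd vs)} \<subseteq> set vs"
proof -
  define \<rho> where "\<rho> = R (\<phi> (last vs))"
  have "map R vs = map R (hd vs # tl vs)"
    using \<open>vs \<noteq> []\<close> by simp
  also have "\<dots> = R (hd vs) # map (R \<circ> \<phi>) (butlast vs)"
    using steps by simp
  finally have "map R vs = R (hd vs) # map (R \<circ> \<phi>) (butlast vs)" .
  moreover have "map (R \<circ> \<phi>) vs = map (R \<circ> \<phi>) (butlast vs) @ [\<rho>]"
    using \<open>vs \<noteq> []\<close> by (simp add: map_butlast_snoc_last \<rho>_def)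
  ultimately have count: "count_list (map (R \<circ> \<phi>) vs) \<rho> + (if R (hd vs) = \<rho> then 1 else 0)
      = count_list (map R vs) \<rho> + 1"
    by simp
  have visited_rank: "count_list (map R vs) \<rho> = card {b\<in>B. R b = \<rho>}"
  proof -
    have "{b \<in> set vs. R b = \<rho>} = {b\<in>B. R b = \<rho>}"
      using stuck \<open>set vs \<subseteq> B\<close> unfolding \<rho>_def by blast
    then show ?thesis
      by (simp add: count_list_map_distinct[OF \<open>distinct vs\<close>])
  qed
  have shifted_le: "card {b\<in>B. R (\<phi> b) = \<rho>} \<le> card {b\<in>B. R b = \<rho>}"
    by (rule card_inj_endo_preimage_le) fact+
  have visited_shifted: "count_list (map (R \<circ> \<phi>) vs) \<rho> = card {b \<in> set vs. R (\<phi> b) = \<rho>}"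
    by (simp add: count_list_map_distinct[OF \<open>distinct vs\<close>])
  moreover have "card {b \<in> set vs. R (\<phi> b) = \<rho>} \<le> card {b\<in>B. R (\<phi> b) = \<rho>}"
    using \<open>finite B\<close> \<open>set vs \<subseteq> B\<close> by (intro card_mono) auto
  ultimately have start: "R (hd vs) = \<rho>"
    using count visited_rank shifted_le by (auto split: if_splits)
  then show "R (\<phi> (last vs)) = R (hd vs)" unfolding \<rho>_def ..
  have "card {b\<in>B. R (\<phi> b) = \<rho>} \<le> card {b \<in> set vs. R (\<phi> b) = \<rho>}"
    using count visited_rank shifted_le visited_shifted start by simp
  then have "{b \<in> set vs. R (\<phi> b) = \<rho>} = {b\<in>B. R (\<phi> b) = \<rho>}"
    using \<open>finite B\<close> \<open>set vs \<subseteq> B\<close> by (intro card_seteq) auto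
  then show "{b\<in>B. R (\<phi> b) = R (hd vs)} \<subseteq> set vs"
    using start by blast
qed

section \<open>The Walking Algorithm\<close>

text \<open>The box whose rank the Walking Algorithm looks up next: the box above, or the bottom
  box of the column when standing in row 1.\<close>
definition cyc_above :: "nat \<Rightarrow> box \<Rightarrow> box" where
  "cyc_above k b = (if snd b = 1 then (fst b, k + 1) else (fst b, snd b - 1))"

lemma cyc_above_boxes: "cyc_above k ` boxes n k \<subseteq> boxes n k"
  by (auto simp: cyc_above_def boxes_def)

lemma inj_on_cyc_above: "inj_on (cyc_above k) (boxes n k)"
  by (auto simp: inj_on_def cyc_above_def boxes_def split: if_splits)

lemma walk_next_cyc_above:
  "walk_next n k T cur M =
    (let C = {b\<in>boxes n k. rankR n k T b = rankR n k T (cyc_above k cur) \<and> b \<notin> M}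
     in if C = {} then None else Some (ARG_MAX (idx T) b. b \<in> C))"
  unfolding walk_next_def cyc_above_def Let_def by simp

lemma walk_next_eq_None_iff:
  "walk_next n k T cur M = None
    \<longleftrightarrow> {b\<in>boxes n k. rankR n k T b = rankR n k T (cyc_above k cur)} \<subseteq> M"
  unfolding walk_next_cyc_above Let_def by auto

lemma top_rank_1: "top_rank n k T 1 = 0"
  unfolding top_rank_def by (subst foldl_fun_upd_notin) auto

lemma rankR_1_1: "rankR n k T (1, 1) = 0"
  using top_rank_1[of n k T] by (simp add: rankR_def)

lemma rankR_1_2: "rankR n k T (1, 2) = 1"
  using top_rank_1[of n k T] by (simp add: rankR_def)

lemma rankR_eq_1_if_cyc_above_rank_0:
  assumes "b \<in> boxes n k" and "k \<ge> 1" and "rankR n k T (cyc_above k b) = 0"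
  shows "rankR n k T b = 1"
  using assms by (auto simp: rankR_def cyc_above_def boxes_def split: if_splits)

definition walk_inv :: "nat \<Rightarrow> nat \<Rightarrow> tableau \<Rightarrow> box list \<Rightarrow> bool" where
  "walk_inv n k T vs \<longleftrightarrow> vs \<noteq> [] \<and> distinct vs \<and> set vs \<subseteq> boxes n k
     \<and> rankR n k T (hd vs) = 0
     \<and> map (rankR n k T) (tl vs) = map (rankR n k T \<circ> cyc_above k) (butlast vs)
     \<and> (\<forall>j b. 0 < j \<longrightarrow> j < length vs \<longrightarrow> b \<in> boxes n k \<longrightarrow> rankR n k T b = rankR n k T (vs ! j)
            \<longrightarrow> b \<notin> set (take j vs) \<longrightarrow> idx T b \<le> idx T (vs ! j))"

lemma walk_inv_snoc:
  assumes inv: "walk_inv n k T vs" and next_b: "walk_next n k T (last vs) (set vs) = Some b"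
  shows "walk_inv n k T (vs @ [b])"
proof -
  define C where
    "C = {b\<in>boxes n k. rankR n k T b = rankR n k T (cyc_above k (last vs)) \<and> b \<notin> set vs}"
  have "C \<noteq> {}" and b_def: "b = (ARG_MAX (idx T) b. b \<in> C)"
    using next_b unfolding walk_next_cyc_above C_def[symmetric] Let_def by (auto split: if_splits)
  moreover have "finite C"
    unfolding C_def boxes_def by simp
  ultimately have "b \<in> C" and b_max: "\<And>b'. b' \<in> C \<Longrightarrow> idx T b' \<le> idx T b"
    using arg_max_nat_finite[of "\<lambda>b. b \<in> C"] by auto
  have "vs \<noteq> []"
    using inv unfolding walk_inv_def by blast
  then have "map (rankR n k T \<circ> cyc_above k) vs
      = map (rankR n k T \<circ> cyc_above k) (butlast vs) @ [rankR n k T (cyc_above k (last vs))]"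
    by (simp add: map_butlast_snoc_last)
  with \<open>b \<in> C\<close> \<open>vs \<noteq> []\<close> inv
  have steps:
    "map (rankR n k T) (tl (vs @ [b])) = map (rankR n k T \<circ> cyc_above k) (butlast (vs @ [b]))"
    unfolding walk_inv_def C_def by simp
  have old_greedy: "idx T b' \<le> idx T (vs ! j)"
    if "0 < j" "j < length vs" "b' \<in> boxes n k" "rankR n k T b' = rankR n k T (vs ! j)"
      "b' \<notin> set (take j vs)" for j b'
    using inv that unfolding walk_inv_def by blast
  have greedy: "idx T b' \<le> idx T ((vs @ [b]) ! j)"
    if "0 < j" "j < length (vs @ [b])" "b' \<in> boxes n k"
      "rankR n k T b' = rankR n k T ((vs @ [b]) ! j)" "b' \<notin> set (take j (vs @ [b]))" for j b'
  proof (cases "j < length vs")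
    case True
    then show ?thesis
      using old_greedy[of j b'] that by (simp add: nth_append)
  next
    case False
    then have "j = length vs"
      using that(2) by simp
    then show ?thesis
      using that \<open>b \<in> C\<close> b_max unfolding C_def by simp
  qed
  show ?thesis
    using inv \<open>b \<in> C\<close> steps greedy unfolding walk_inv_def C_def by auto
qed

lemma walk_iter_inv:
  assumes "walk_inv n k T vs"
  shows "walk_inv n k T (walk_iter n k T f vs)
    \<and> (walk_next n k T (last (walk_iter n k T f vs)) (set (walk_iter n k T f vs)) = None
       \<or> length (walk_iter n k T f vs) = length vs + f)"
  using assms
proof (induction f arbitrary: vs)
  case 0
  then show ?case by simp
next
  case (Suc f)
  show ?case
  proof (cases "walk_next n k T (last vs) (set vs)")
    case None
    then show ?thesis
      using Suc.prems by simp
  next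
    case (Some b)
    then show ?thesis
      using Suc.IH[OF walk_inv_snoc[OF Suc.prems Some]] by simp
  qed
qed

lemma walk_inv_start:
  assumes "n \<ge> 1"
  shows "walk_inv n k T [walk_start n k T]"
proof -
  have "finite {b. b \<in> boxes n k \<and> rankR n k T b = 0}"
    by (simp add: boxes_def)
  moreover have "(1, 1) \<in> boxes n k \<and> rankR n k T (1, 1) = 0"
    using assms rankR_1_1[of n k T] by (simp add: boxes_def)
  ultimately have "walk_start n k T \<in> boxes n k \<and> rankR n k T (walk_start n k T) = 0"
    unfolding walk_start_def by (rule arg_max_nat_finite(1))
  then show ?thesis
    unfolding walk_inv_def by simp
qed

text \<open>The fuel n (k + 1) of the walk never runs out, as the walk visits distinct boxes.\<close>
lemma walk_inv_and_stuck:
  assumes "n \<ge> 1"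
  shows "walk_inv n k T (walk n k T)"
    and "walk_next n k T (last (walk n k T)) (set (walk n k T)) = None"
proof -
  note iter = walk_iter_inv[OF walk_inv_start[OF assms, of k T], where f = "n * (k + 1)"]
  then show inv: "walk_inv n k T (walk n k T)"
    unfolding walk_def by blast
  have "length (walk n k T) = card (set (walk n k T))"
    using inv by (simp add: walk_inv_def distinct_card)
  also have "\<dots> \<le> card (boxes n k)"
    using inv by (intro card_mono) (auto simp: walk_inv_def boxes_def)
  also have "\<dots> = n * (k + 1)"
    by (simp add: boxes_def)
  finally show "walk_next n k T (last (walk n k T)) (set (walk n k T)) = None"
    using iter unfolding walk_def by auto
qed

lemma walk_inv_later_idx_le:
  assumes inv: "walk_inv n k T vs" and "0 < i" and "i < j" and "j < length vs"
    and "rankR n k T (vs ! j) = rankR n k T (vs ! i)"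
  shows "idx T (vs ! j) \<le> idx T (vs ! i)"
proof -
  have "distinct vs" "set vs \<subseteq> boxes n k"
    using inv unfolding walk_inv_def by auto
  then have "vs ! j \<notin> set (take i vs)"
    using assms(3,4) by (auto simp: in_set_conv_nth nth_eq_iff_index_eq)
  moreover have "vs ! j \<in> boxes n k"
    using nth_mem[OF assms(4)] \<open>set vs \<subseteq> boxes n k\<close> by blast
  moreover have "i < length vs"
    using assms(3,4) by simp
  ultimately show ?thesis
    using inv assms(2,5) unfolding walk_inv_def by blast
qed

lemma walk_ends_at_rank1:
  assumes "n \<ge> 1" and "k \<ge> 1"
  shows "rankR n k T (last (walk n k T)) = 1" and "(1, 2) \<in> set (walk n k T)"
proof -
  define vs where "vs = walk n k T"
  define R where "R = rankR n k T"
  have "vs \<noteq> []" "distinct vs" "set vs \<subseteq> boxes n k" "R (hd vs) = 0"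
    and steps: "map R (tl vs) = map (R \<circ> cyc_above k) (butlast vs)"
    using walk_inv_and_stuck(1)[OF assms(1)] unfolding vs_def R_def walk_inv_def by auto
  have stuck: "{b \<in> boxes n k. R b = R (cyc_above k (last vs))} \<subseteq> set vs"
    using walk_inv_and_stuck(2)[OF assms(1)] unfolding vs_def R_def walk_next_eq_None_iff .
  have "finite (boxes n k)"
    by (simp add: boxes_def)
  note counting = stuck_walk_counting[OF this inj_on_cyc_above cyc_above_boxes
      \<open>distinct vs\<close> \<open>set vs \<subseteq> boxes n k\<close> \<open>vs \<noteq> []\<close> steps stuck]
  have "last vs \<in> boxes n k"
    using \<open>vs \<noteq> []\<close> \<open>set vs \<subseteq> boxes n k\<close> by auto
  then show "rankR n k T (last (walk n k T)) = 1"
    using counting(1) \<open>R (hd vs) = 0\<close> \<open>k \<ge> 1\<close> rankR_eq_1_if_cyc_above_rank_0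
    unfolding vs_def R_def by simp
  have "(1, 2) \<in> {b \<in> boxes n k. R (cyc_above k b) = R (hd vs)}"
    using assms rankR_1_1[of n k T] \<open>R (hd vs) = 0\<close> by (simp add: boxes_def cyc_above_def R_def)
  then show "(1, 2) \<in> set (walk n k T)"
    using counting(2) unfolding vs_def by blast
qed

lemma last_walk_eq_1_2:
  assumes "n \<ge> 1" and "k \<ge> 1"
    and least: "\<And>b. b \<in> boxes n k \<Longrightarrow> rankR n k T b = 1 \<Longrightarrow> b \<noteq> (1, 2)
      \<Longrightarrow> idx T (1, 2) < idx T b"
  shows "last (walk n k T) = (1, 2)"
proof (rule ccontr)
  define vs where "vs = walk n k T"
  assume "last vs \<noteq> (1, 2)"
  have inv: "walk_inv n k T vs"
    using walk_inv_and_stuck(1)[OF assms(1)] unfolding vs_def .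
  then have "vs \<noteq> []" "set vs \<subseteq> boxes n k" "rankR n k T (vs ! 0) = 0"
    unfolding walk_inv_def by (auto simp: hd_conv_nth)
  define l where "l = length vs - 1"
  have last: "last vs = vs ! l" "l < length vs"
    using \<open>vs \<noteq> []\<close> unfolding l_def by (auto simp: last_conv_nth)
  obtain i where i: "i < length vs" "vs ! i = (1, 2)"
    using walk_ends_at_rank1(2)[OF assms(1,2)] unfolding vs_def by (auto simp: in_set_conv_nth)
  have "i \<noteq> 0"
    using i \<open>rankR n k T (vs ! 0) = 0\<close> rankR_1_2[of n k T] by (cases i) auto
  moreover have "i < l"
  proof -
    have "i \<noteq> l"
      using i(2) last(1) \<open>last vs \<noteq> (1, 2)\<close> by auto
    then show ?thesis
      using i(1) unfolding l_def by linarith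
  qed
  moreover have "rankR n k T (vs ! l) = 1"
    using walk_ends_at_rank1(1)[OF assms(1,2), of T] last unfolding vs_def by simp
  ultimately have "idx T (vs ! l) \<le> idx T (1, 2)"
    using walk_inv_later_idx_le[OF inv, of i l] last(2) i rankR_1_2[of n k T] by simp
  moreover have "vs ! l \<in> boxes n k"
    using last(2) \<open>set vs \<subseteq> boxes n k\<close> by auto
  ultimately show False
    using least \<open>rankR n k T (vs ! l) = 1\<close> \<open>last vs \<noteq> (1, 2)\<close> last(1) by fastforce
qed

lemma smallest_rank1_eq_1_2:
  assumes "n \<ge> 1" and "k \<ge> 1"
    and least: "\<And>b. b \<in> boxes n k \<Longrightarrow> rankR n k T b = 1 \<Longrightarrow> b \<noteq> (1, 2)
      \<Longrightarrow> idx T (1, 2) < idx T b"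
  shows "smallest_rank1 n k T = (1, 2)"
proof -
  have "(1, 2) \<in> boxes n k \<and> rankR n k T (1, 2) = 1"
    using assms rankR_1_2[of n k T] by (simp add: boxes_def)
  from arg_min_nat_lemma[of "\<lambda>b. b \<in> boxes n k \<and> rankR n k T b = 1", OF this, of "idx T"]
  show ?thesis
    unfolding smallest_rank1_def using least \<open>(1, 2) \<in> boxes n k \<and> _\<close> by (meson not_le)
qed

section \<open>The words of D_k\<close>

lemma sum_list_letters:
  "\<forall>x\<in>set xs. x = int k \<or> x = -1
    \<Longrightarrow> sum_list xs = (int k + 1) * int (count_list xs (int k)) - int (length xs)"
  by (induction xs) (auto simp: algebra_simps)

lemma Dk_letters: "a \<in> Dk n k \<Longrightarrow> x \<in> set a \<Longrightarrow> x = int k \<or> x = -1"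
  by (simp add: Dk_def)

lemma count_list_conv_length_filter: "count_list xs y = length (filter (\<lambda>x. x = y) xs)"
  by (induction xs) auto

lemma Dk_count: "a \<in> Dk n k \<Longrightarrow> count_list a (int k) = n"
  by (simp add: Dk_def count_list_conv_length_filter)

lemma count_list_take_le: "count_list (take i xs) x \<le> count_list xs x"
  by (metis append_take_drop_id count_list_append le_add1)

lemma Dk_prefix_sum_nonneg:
  assumes "a \<in> Dk n k" and "i \<le> length a"
  shows "0 \<le> sum_list (take i a)"
proof (cases "i = length a")
  case True
  have "length a = n + n * k"
    using assms(1) by (simp add: Dk_def)
  then show ?thesis
    using True sum_list_letters[of a k] Dk_letters[OF assms(1)] Dk_count[OF assms(1)]
    by (simp add: algebra_simps)
next
  case False
  then have "Suc i \<le> length a"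
    using assms(2) by simp
  moreover have "\<forall>i. 1 \<le> i \<and> i \<le> length a \<longrightarrow> 0 \<le> sum_list (take (i - 1) a)"
    using assms(1) by (simp add: Dk_def)
  ultimately show ?thesis
    by fastforce
qed

lemma Dk_W_room:
  assumes "a \<in> Dk n k" and "i < length a" and "a ! i = -1"
  shows "i < (k + 1) * count_list (take i a) (int k)"
proof -
  have take_Suc: "take (Suc i) a = take i a @ [-1]"
    using assms(2,3) by (simp add: take_Suc_conv_app_nth)
  have "\<forall>x\<in>set (take (Suc i) a). x = int k \<or> x = -1"
    using Dk_letters[OF assms(1)] by (meson in_set_takeD)
  then have "sum_list (take (Suc i) a)
      = (int k + 1) * int (count_list (take i a) (int k)) - int (Suc i)"
    using sum_list_letters[of "take (Suc i) a" k] assms(2) unfolding take_Suc by simp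
  moreover have "0 \<le> sum_list (take (Suc i) a)"
    using Dk_prefix_sum_nonneg[OF assms(1)] assms(2) by simp
  ultimately have "int (Suc i) \<le> int ((k + 1) * count_list (take i a) (int k))"
    by (simp only: of_nat_mult of_nat_add of_nat_1)
  then show ?thesis
    by linarith
qed

lemma Dk_first_S: "a \<in> Dk n k \<Longrightarrow> a \<noteq> [] \<Longrightarrow> a ! 0 = int k"
  using Dk_prefix_sum_nonneg[of a n k 1] Dk_letters[of a n k "a ! 0"] by (cases a) auto

definition first_W_at :: "int list \<Rightarrow> nat \<Rightarrow> nat \<Rightarrow> bool" where
  "first_W_at a k j \<longleftrightarrow> j < length a \<and> a ! j = -1 \<and> (\<forall>i<j. a ! i = int k)"

lemma Dk_first_W:
  assumes "a \<in> Dk n k" and "n \<ge> 1" and "k \<ge> 1"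
  obtains j where "first_W_at a k j" "1 \<le> j" "j \<le> n"
proof -
  define j where "j = length (takeWhile (\<lambda>x. x = int k) a)"
  have "take j a = takeWhile (\<lambda>x. x = int k) a"
    unfolding j_def by (rule takeWhile_eq_take[symmetric])
  then have leading_S: "\<forall>x\<in>set (take j a). x = int k"
    by (auto dest: set_takeWhileD)
  have "j = length (take j a)"
    unfolding j_def by (simp add: length_takeWhile_le min_absorb1)
  also have "\<dots> = count_list (take j a) (int k)"
    using leading_S by (simp add: count_list_conv_length_filter filter_id_conv)
  also have "\<dots> \<le> n"
    using count_list_take_le[of j a "int k"] Dk_count[OF assms(1)] by simp
  finally have "j \<le> n" .
  moreover have "length a = n + n * k"
    using assms(1) by (simp add: Dk_def)
  ultimately have "j < length a"
    using mult_le_mono[OF assms(2,3)] by linarith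
  then have "a ! j = -1"
    using Dk_letters[OF assms(1) nth_mem] nth_length_takeWhile[of "\<lambda>x. x = int k" a]
    unfolding j_def by fastforce
  have "a ! i = int k" if "i < j" for i
  proof -
    have "take j a ! i \<in> set (take j a)"
      using \<open>i < j\<close> \<open>j < length a\<close> by (intro nth_mem) simp
    then show ?thesis
      using leading_S \<open>i < j\<close> by simp
  qed
  moreover have "1 \<le> j"
    using \<open>j < length a\<close> \<open>a ! j = -1\<close> Dk_first_S[OF assms(1)] by (cases j) auto
  ultimately show thesis
    using that \<open>j < length a\<close> \<open>a ! j = -1\<close> \<open>j \<le> n\<close> unfolding first_W_at_def by blast
qed

section \<open>The Filling Algorithm\<close>

definition fill_upto :: "nat \<Rightarrow> nat \<Rightarrow> int list \<Rightarrow> nat \<Rightarrow> tableau" where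
  "fill_upto n k a i = foldl (\<lambda>T i. fill_step n k T i (a ! (i - 1))) fill_init [2..<Suc i]"

lemma fillT_eq_fill_upto: "fillT n k a = fill_upto n k a (length a)"
  by (simp add: fillT_def fill_upto_def)

lemma fill_upto_1: "fill_upto n k a 1 = fill_init"
  by (simp add: fill_upto_def)

lemma fill_upto_Suc:
  "i \<ge> 1 \<Longrightarrow> fill_upto n k a (Suc i) = fill_step n k (fill_upto n k a i) (Suc i) (a ! i)"
  by (simp add: fill_upto_def)

lemma fill_step_entry: "fill_step n k T i x c r \<in> {T c r, i}"
  by (auto simp: fill_step_def Let_def)

lemma fill_upto_entry_cases:
  "j \<le> i \<Longrightarrow> fill_upto n k a i c r = fill_upto n k a j c r \<or> j < fill_upto n k a i c r"
proof (induction i)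
  case 0
  then show ?case by simp
next
  case (Suc i)
  show ?case
  proof (cases "j = Suc i \<or> i = 0")
    case True
    with Suc.prems show ?thesis
      by (auto simp: fill_upto_def)
  next
    case False
    then have "fill_upto n k a (Suc i) c r \<in> {fill_upto n k a i c r, Suc i}"
      using fill_step_entry[of n k "fill_upto n k a i" "Suc i" "a ! i" c r]
      by (simp add: fill_upto_Suc)
    then show ?thesis
      using Suc False by auto
  qed
qed

definition col_heights :: "nat \<Rightarrow> nat \<Rightarrow> tableau \<Rightarrow> (nat \<Rightarrow> nat) \<Rightarrow> bool" where
  "col_heights n k T h \<longleftrightarrow> (\<forall>c\<in>{1..n}. h c \<le> k + 1 \<and> (\<forall>r\<in>{1..k+1}. T c r \<noteq> 0 \<longleftrightarrow> r \<le> h c))"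

lemma col_heights_col_nonempty:
  "col_heights n k T h \<Longrightarrow> c \<in> {1..n} \<Longrightarrow> col_nonempty k T c \<longleftrightarrow> 0 < h c"
  unfolding col_heights_def col_nonempty_def by (auto intro!: bexI[of _ 1])

lemma col_heights_lowest_row:
  assumes "col_heights n k T h" and "c \<in> {1..n}" and "0 < h c"
  shows "lowest_row k T c = h c"
proof -
  have "h c \<le> k + 1" and "\<forall>r\<in>{1..k+1}. T c r \<noteq> 0 \<longleftrightarrow> r \<le> h c"
    using assms(1,2) unfolding col_heights_def by auto
  then have "{r\<in>{1..k+1}. T c r \<noteq> 0} = {1..h c}"
    by auto
  moreover have "Max {1..h c} = h c"
    using \<open>0 < h c\<close> by (intro Max_eqI) auto
  ultimately show ?thesis
    unfolding lowest_row_def by simp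
qed

lemma col_heights_active_cols:
  assumes "col_heights n k T h"
  shows "active_cols n k T = {c\<in>{1..n}. 0 < h c \<and> h c < k + 1}"
proof -
  have "c \<in> active_cols n k T \<longleftrightarrow> c \<in> {1..n} \<and> 0 < h c \<and> h c < k + 1" for c
  proof (cases "c \<in> {1..n} \<and> 0 < h c")
    case True
    then show ?thesis
      using assms col_heights_lowest_row[OF assms] col_heights_col_nonempty[OF assms]
      unfolding active_cols_def col_heights_def by fastforce
  next
    case False
    then show ?thesis
      using col_heights_col_nonempty[OF assms] unfolding active_cols_def by auto
  qed
  then show ?thesis
    by blast
qed

lemma col_heights_grow:
  assumes "col_heights n k T h" and "c \<in> {1..n}" and "h c < k + 1" and "i \<noteq> 0"
  shows "col_heights n k (T(c := (T c)(Suc (h c) := i))) (h(c := Suc (h c)))"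
    and "T c (Suc (h c)) = 0"
proof -
  have "Suc (h c) \<in> {1..k+1}"
    using assms(3) by simp
  then have "T c (Suc (h c)) \<noteq> 0 \<longleftrightarrow> Suc (h c) \<le> h c"
    using assms(1,2) unfolding col_heights_def by blast
  then show "T c (Suc (h c)) = 0"
    by simp
  then show "col_heights n k (T(c := (T c)(Suc (h c) := i))) (h(c := Suc (h c)))"
    using assms unfolding col_heights_def by auto
qed

lemma sum_fun_upd_Suc:
  fixes h :: "'a \<Rightarrow> nat"
  shows "finite A \<Longrightarrow> x \<in> A \<Longrightarrow> sum (h(x := Suc (h x))) A = Suc (sum h A)"
  by (simp add: sum.remove)

lemma fill_step_S:
  assumes heights: "col_heights n k T h"
    and opened: "\<forall>c\<in>{1..n}. 0 < h c \<longleftrightarrow> c \<le> p" and "p < n"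
  shows "fill_step n k T i (int k) = T(Suc p := (T (Suc p))(Suc (h (Suc p)) := i))"
    and "Suc p \<in> {1..n}" and "h (Suc p) < k + 1"
    and "\<forall>c\<in>{1..n}. 0 < (h(Suc p := Suc (h (Suc p)))) c \<longleftrightarrow> c \<le> Suc p"
proof -
  show "Suc p \<in> {1..n}"
    using \<open>p < n\<close> by simp
  then have "0 < h (Suc p) \<longleftrightarrow> Suc p \<le> p"
    using opened by blast
  then have "h (Suc p) = 0"
    by simp
  then show "h (Suc p) < k + 1"
    by simp
  have "(LEAST c. c \<in> {1..n} \<and> \<not> col_nonempty k T c) = Suc p"
    by (rule Least_equality)
      (use \<open>p < n\<close> opened col_heights_col_nonempty[OF heights] in \<open>auto simp: not_less_eq_eq\<close>)
  then show "fill_step n k T i (int k) = T(Suc p := (T (Suc p))(Suc (h (Suc p)) := i))"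
    using \<open>h (Suc p) = 0\<close> by (simp add: fill_step_def)
  show "\<forall>c\<in>{1..n}. 0 < (h(Suc p := Suc (h (Suc p)))) c \<longleftrightarrow> c \<le> Suc p"
  proof
    fix c
    assume "c \<in> {1..n}"
    then have "0 < h c \<longleftrightarrow> c \<le> p"
      using opened by blast
    then show "0 < (h(Suc p := Suc (h (Suc p)))) c \<longleftrightarrow> c \<le> Suc p"
      by auto
  qed
qed

lemma col_heights_active_cols_nonempty:
  assumes heights: "col_heights n k T h"
    and opened: "\<forall>c\<in>{1..n}. 0 < h c \<longleftrightarrow> c \<le> p" and "p \<le> n"
    and room: "sum h {1..n} < (k + 1) * p"
  shows "active_cols n k T \<noteq> {}"
proof
  assume none_active: "active_cols n k T = {}"
  have "h c = k + 1" if "c \<in> {1..p}" for c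
  proof -
    have "c \<in> {1..n}"
      using that \<open>p \<le> n\<close> by auto
    then have "0 < h c" "h c \<le> k + 1"
      using that opened heights unfolding col_heights_def by auto
    moreover have "\<not> h c < k + 1"
      using none_active \<open>c \<in> {1..n}\<close> \<open>0 < h c\<close>
      unfolding col_heights_active_cols[OF heights] by blast
    ultimately show ?thesis
      by simp
  qed
  then have "(k + 1) * p = sum h {1..p}"
    by simp
  also have "\<dots> \<le> sum h {1..n}"
    using \<open>p \<le> n\<close> by (intro sum_mono2) auto
  finally show False
    using room by simp
qed

lemma fill_step_W:
  assumes heights: "col_heights n k T h"
    and opened: "\<forall>c\<in>{1..n}. 0 < h c \<longleftrightarrow> c \<le> p" and "p \<le> n"
    and room: "sum h {1..n} < (k + 1) * p"
  obtains c where "c \<in> {1..n}" "h c < k + 1"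
    "fill_step n k T i (-1) = T(c := (T c)(Suc (h c) := i))"
    "\<forall>c'\<in>{1..n}. 0 < (h(c := Suc (h c))) c' \<longleftrightarrow> c' \<le> p"
proof -
  obtain c0 where "c0 \<in> active_cols n k T"
    using col_heights_active_cols_nonempty[OF assms] by blast
  define c where "c = (ARG_MIN (\<lambda>c. T c (lowest_row k T c)) c. c \<in> active_cols n k T)"
  have "c \<in> active_cols n k T"
    unfolding c_def by (rule arg_min_natI) fact
  then have c: "c \<in> {1..n}" "0 < h c" "h c < k + 1"
    unfolding col_heights_active_cols[OF heights] by auto
  moreover have "fill_step n k T i (-1) = T(c := (T c)(Suc (h c) := i))"
    using col_heights_lowest_row[OF heights c(1,2)] by (simp add: fill_step_def c_def[symmetric])
  moreover have "\<forall>c'\<in>{1..n}. 0 < (h(c := Suc (h c))) c' \<longleftrightarrow> c' \<le> p"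
  proof
    fix c'
    assume "c' \<in> {1..n}"
    then have "0 < h c' \<longleftrightarrow> c' \<le> p" "0 < h c \<longleftrightarrow> c \<le> p"
      using opened c(1) by blast+
    then show "0 < (h(c := Suc (h c))) c' \<longleftrightarrow> c' \<le> p"
      using c(2) by auto
  qed
  ultimately show thesis
    using that by blast
qed

definition fill_inv :: "nat \<Rightarrow> nat \<Rightarrow> int list \<Rightarrow> nat \<Rightarrow> tableau \<Rightarrow> bool" where
  "fill_inv n k a i T \<longleftrightarrow> (\<exists>h. col_heights n k T h
     \<and> (\<forall>c\<in>{1..n}. 0 < h c \<longleftrightarrow> c \<le> count_list (take i a) (int k)) \<and> sum h {1..n} = i)"

lemma fill_step_next_box:
  assumes "a \<in> Dk n k" and "i < length a" and heights: "col_heights n k T h"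
    and opened: "\<forall>c\<in>{1..n}. 0 < h c \<longleftrightarrow> c \<le> count_list (take i a) (int k)"
    and filled: "sum h {1..n} = i"
  obtains c where "c \<in> {1..n}" "h c < k + 1"
    "fill_step n k T (Suc i) (a ! i) = T(c := (T c)(Suc (h c) := Suc i))"
    "\<forall>c'\<in>{1..n}. 0 < (h(c := Suc (h c))) c' \<longleftrightarrow> c' \<le> count_list (take (Suc i) a) (int k)"
proof -
  define p where "p = count_list (take i a) (int k)"
  have take_Suc: "take (Suc i) a = take i a @ [a ! i]"
    using \<open>i < length a\<close> by (simp add: take_Suc_conv_app_nth)
  show thesis
  proof (cases "a ! i = int k")
    case True
    then have count: "count_list (take (Suc i) a) (int k) = Suc p"
      unfolding take_Suc p_def by simp
    then have "p < n"
      using count_list_take_le[of "Suc i" a "int k"] Dk_count[OF assms(1)] by simp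
    note S_step = fill_step_S[OF heights opened[folded p_def] this]
    show thesis
      by (rule that[OF S_step(2,3)]) (use S_step(1,4) True count in simp_all)
  next
    case False
    then have "a ! i = -1"
      using Dk_letters[OF assms(1) nth_mem[OF \<open>i < length a\<close>]] by simp
    have "p \<le> n"
      using count_list_take_le[of i a "int k"] Dk_count[OF assms(1)] unfolding p_def by simp
    moreover have "sum h {1..n} < (k + 1) * p"
      using Dk_W_room[OF assms(1,2) \<open>a ! i = -1\<close>] filled unfolding p_def by simp
    ultimately show thesis
      using that fill_step_W[OF heights opened[folded p_def]] \<open>a ! i = -1\<close>
      unfolding take_Suc p_def by auto
  qed
qed

lemma fill_inv_step:
  assumes "a \<in> Dk n k" and "fill_inv n k a i T" and "i < length a"
  shows "fill_inv n k a (Suc i) (fill_step n k T (Suc i) (a ! i))"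
    and "T c r \<noteq> 0 \<Longrightarrow> fill_step n k T (Suc i) (a ! i) c r = T c r"
proof -
  obtain h where heights: "col_heights n k T h"
    and opened: "\<forall>c\<in>{1..n}. 0 < h c \<longleftrightarrow> c \<le> count_list (take i a) (int k)"
    and filled: "sum h {1..n} = i"
    using assms(2) unfolding fill_inv_def by blast
  obtain c0 where c0: "c0 \<in> {1..n}" "h c0 < k + 1"
    and step: "fill_step n k T (Suc i) (a ! i) = T(c0 := (T c0)(Suc (h c0) := Suc i))"
    and opened': "\<forall>c\<in>{1..n}. 0 < (h(c0 := Suc (h c0))) c \<longleftrightarrow> c \<le> count_list (take (Suc i) a) (int k)"
    using fill_step_next_box[OF assms(1,3) heights opened filled] .
  show "fill_inv n k a (Suc i) (fill_step n k T (Suc i) (a ! i))"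
    unfolding fill_inv_def step
  proof (intro exI conjI)
    show "col_heights n k (T(c0 := (T c0)(Suc (h c0) := Suc i))) (h(c0 := Suc (h c0)))"
      using col_heights_grow(1)[OF heights c0] by simp
    show "sum (h(c0 := Suc (h c0))) {1..n} = Suc i"
      using sum_fun_upd_Suc[of "{1..n}" c0 h] c0(1) filled by simp
  qed (rule opened')
  show "T c r \<noteq> 0 \<Longrightarrow> fill_step n k T (Suc i) (a ! i) c r = T c r"
    using col_heights_grow(2)[OF heights c0] unfolding step by auto
qed

lemma fill_inv_fill_upto:
  assumes "a \<in> Dk n k" and "n \<ge> 1"
  shows "1 \<le> i \<Longrightarrow> i \<le> length a \<Longrightarrow> fill_inv n k a i (fill_upto n k a i)"
proof (induction i)
  case 0
  then show ?case by simp
next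
  case (Suc i)
  show ?case
  proof (cases "i = 0")
    case True
    then have "take (Suc i) a = [int k]"
      using Suc.prems Dk_first_S[OF assms(1)] by (cases a) auto
    moreover have "col_heights n k fill_init (\<lambda>c. if c = 1 then 1 else 0)"
      by (auto simp: col_heights_def fill_init_def)
    moreover have "(\<Sum>c\<in>{1..n}. if c = 1 then 1 else 0) = (1::nat)"
      using \<open>n \<ge> 1\<close> by simp
    ultimately show ?thesis
      unfolding fill_inv_def using True fill_upto_1[of n k a]
      by (intro exI[of _ "\<lambda>c. if c = 1 then 1 else 0"]) auto
  next
    case False
    then show ?thesis
      using fill_inv_step(1)[OF assms(1) Suc.IH] Suc.prems by (simp add: fill_upto_Suc)
  qed
qed

lemma fill_upto_stable:
  assumes "a \<in> Dk n k" and "n \<ge> 1" and "1 \<le> j"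
  shows "j \<le> i \<Longrightarrow> i \<le> length a \<Longrightarrow> fill_upto n k a j c r \<noteq> 0
    \<Longrightarrow> fill_upto n k a i c r = fill_upto n k a j c r"
proof (induction i)
  case 0
  then show ?case by simp
next
  case (Suc i)
  show ?case
  proof (cases "j = Suc i")
    case False
    then have "1 \<le> i" "j \<le> i"
      using Suc.prems \<open>1 \<le> j\<close> by auto
    then show ?thesis
      using Suc fill_inv_step(2)[OF assms(1) fill_inv_fill_upto[OF assms(1,2)]]
      by (simp add: fill_upto_Suc)
  qed simp
qed

lemma fillT_nonzero:
  assumes "a \<in> Dk n k" and "n \<ge> 1" and "(c, r) \<in> boxes n k"
  shows "fillT n k a c r \<noteq> 0"
proof -
  have "length a = n * (k + 1)"
    using assms(1) by (simp add: Dk_def)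
  then obtain h where heights: "col_heights n k (fillT n k a) h"
    and filled: "sum h {1..n} = n * (k + 1)"
    using fill_inv_fill_upto[OF assms(1,2), of "length a"] \<open>n \<ge> 1\<close>
    unfolding fillT_eq_fill_upto fill_inv_def by auto
  have "c \<in> {1..n}" and "r \<in> {1..k+1}"
    using assms(3) by (auto simp: boxes_def)
  have le: "\<forall>c'\<in>{1..n}. h c' \<le> k + 1"
    and cells: "\<forall>r'\<in>{1..k+1}. fillT n k a c r' \<noteq> 0 \<longleftrightarrow> r' \<le> h c"
    using heights \<open>c \<in> {1..n}\<close> unfolding col_heights_def by auto
  have "h c = k + 1"
  proof (rule ccontr)
    assume "h c \<noteq> k + 1"
    then have "h c < k + 1"
      using le \<open>c \<in> {1..n}\<close> by fastforce
    then have "sum h {1..n} < (\<Sum>c\<in>{1..n}. k + 1)"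
      using le \<open>c \<in> {1..n}\<close> by (intro sum_strict_mono_ex1) auto
    then show False
      using filled by simp
  qed
  then show ?thesis
    using cells \<open>r \<in> {1..k+1}\<close> by auto
qed

section \<open>The beginning of T(D)\<close>

definition first_row :: "nat \<Rightarrow> tableau" where
  "first_row j c r = (if r = 1 \<and> 1 \<le> c \<and> c \<le> j then c else 0)"

lemma col_heights_first_row:
  "col_heights n k (first_row j) (\<lambda>c. if c \<le> j then 1 else 0)"
  by (auto simp: col_heights_def first_row_def)

lemma fill_upto_leading_S:
  assumes "j \<le> n" and leading_S: "\<forall>i<j. a ! i = int k"
  shows "1 \<le> i \<Longrightarrow> i \<le> j \<Longrightarrow> fill_upto n k a i = first_row i"
proof (induction i)
  case 0
  then show ?case by simp
next
  case (Suc i)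
  show ?case
  proof (cases "i = 0")
    case True
    then show ?thesis
      using fill_upto_1[of n k a] by (auto simp: fill_init_def first_row_def fun_eq_iff)
  next
    case False
    have "\<forall>c\<in>{1..n}. 0 < (if c \<le> i then 1 else 0 :: nat) \<longleftrightarrow> c \<le> i"
      by simp
    note S_step = fill_step_S[OF col_heights_first_row this]
    have "fill_upto n k a (Suc i) = fill_step n k (first_row i) (Suc i) (int k)"
      using Suc False leading_S by (simp add: fill_upto_Suc)
    also have "\<dots> = (first_row i)(Suc i := (first_row i (Suc i))(1 := Suc i))"
      using S_step(1) Suc.prems \<open>j \<le> n\<close> by simp
    also have "\<dots> = first_row (Suc i)"
      by (auto simp: first_row_def fun_eq_iff)
    finally show ?thesis .
  qed
qed

text \<open>All open columns hold a single entry, and column 1 holds the smallest one.\<close>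
lemma fill_step_first_row_W:
  assumes "1 \<le> j" and "j \<le> n" and "k \<ge> 1"
  shows "fill_step n k (first_row j) i (-1) = (first_row j)(1 := (first_row j 1)(2 := i))"
proof -
  have lowest: "lowest_row k (first_row j) c = 1" if "c \<in> {1..j}" for c
    using col_heights_lowest_row[OF col_heights_first_row, of c n] that \<open>j \<le> n\<close> by simp
  have active: "active_cols n k (first_row j) = {1..j}"
    using col_heights_active_cols[OF col_heights_first_row] \<open>j \<le> n\<close> \<open>k \<ge> 1\<close> by auto
  define c where "c = (ARG_MIN (\<lambda>c. first_row j c (lowest_row k (first_row j) c)) c.
    c \<in> active_cols n k (first_row j))"
  have "c \<in> {1..j}"
    and "first_row j c (lowest_row k (first_row j) c) \<le> first_row j 1 (lowest_row k (first_row j) 1)"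
    using arg_min_nat_lemma[of "\<lambda>c. c \<in> active_cols n k (first_row j)" 1
        "\<lambda>c. first_row j c (lowest_row k (first_row j) c)"] \<open>1 \<le> j\<close>
    unfolding c_def active by auto
  then have "c = 1"
    using lowest \<open>1 \<le> j\<close> by (simp add: first_row_def)
  then show ?thesis
    using lowest[of 1] \<open>1 \<le> j\<close> by (simp add: fill_step_def c_def[symmetric] numeral_2_eq_2)
qed

lemma fillT_leading_entries:
  assumes "a \<in> Dk n k" and "n \<ge> 1" and "k \<ge> 1"
    and first_W: "first_W_at a k j" and "1 \<le> j" and "j \<le> n"
  shows "1 \<le> c \<Longrightarrow> c \<le> j \<Longrightarrow> fillT n k a c 1 = c"
    and "fillT n k a 1 2 = Suc j"
    and "(c, r) \<in> boxes n k \<Longrightarrow> \<not> (r = 1 \<and> c \<le> j) \<Longrightarrow> (c, r) \<noteq> (1, 2)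
      \<Longrightarrow> Suc j < fillT n k a c r"
proof -
  have "j < length a" "a ! j = -1" "\<forall>i<j. a ! i = int k"
    using first_W unfolding first_W_at_def by auto
  let ?F = "fill_upto n k a (Suc j)"
  have F: "?F = (first_row j)(1 := (first_row j 1)(2 := Suc j))"
    using fill_upto_Suc[of j n k a] fill_upto_leading_S[OF \<open>j \<le> n\<close> \<open>\<forall>i<j. a ! i = int k\<close> \<open>1 \<le> j\<close>]
      fill_step_first_row_W[OF \<open>1 \<le> j\<close> \<open>j \<le> n\<close> \<open>k \<ge> 1\<close>] \<open>1 \<le> j\<close> \<open>a ! j = -1\<close> by simp
  have keep: "fillT n k a c r = ?F c r" if "?F c r \<noteq> 0" for c r
    using fill_upto_stable[OF assms(1,2), of "Suc j" "length a"] that \<open>j < length a\<close>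
    unfolding fillT_eq_fill_upto by simp
  show "fillT n k a c 1 = c" if "1 \<le> c" "c \<le> j"
    using keep[of c 1] F that by (simp add: first_row_def)
  show "fillT n k a 1 2 = Suc j"
    using keep[of 1 2] F by simp
  show "Suc j < fillT n k a c r"
    if "(c, r) \<in> boxes n k" "\<not> (r = 1 \<and> c \<le> j)" "(c, r) \<noteq> (1, 2)"
  proof -
    have "?F c r = 0"
      using F that(2,3) by (auto simp: first_row_def)
    then show ?thesis
      using fill_upto_entry_cases[of "Suc j" "length a" n k a c r]
        fillT_nonzero[OF assms(1,2) that(1)] \<open>j < length a\<close>
      unfolding fillT_eq_fill_upto by auto
  qed
qed

lemma top_rank_first_row:
  assumes "1 \<le> j" and "j \<le> n"
    and leading: "\<And>c. 1 \<le> c \<Longrightarrow> c \<le> j \<Longrightarrow> T c 1 = c \<and> pos_of n k T c = (c, 1)"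
  shows "c \<le> j \<Longrightarrow> top_rank n k T c = 0"
proof -
  define G where "G = (\<lambda>f c. let b = pos_of n k T (T c 1 - 1) in f (fst b) + (snd b - 1))"
  have "G (\<lambda>_. 0) c = 0" if "c \<in> set [2..<Suc j]" for c
  proof -
    have "2 \<le> c" "c \<le> j"
      using that by auto
    then have "pos_of n k T (T c 1 - 1) = (c - 1, 1)"
      using leading[of c] leading[of "c - 1"] by simp
    then show ?thesis
      by (simp add: G_def)
  qed
  then have prefix: "foldl (\<lambda>f c. f(c := G f c)) (\<lambda>_. 0) [2..<Suc j] = (\<lambda>_. 0)"
    by (rule foldl_fun_upd_fixed)
  have split: "[2..<n + 1] = [2..<Suc j] @ [Suc j..<n + 1]"
    using upt_add_eq_append[of 2 "Suc j" "n - j"] assms(1,2) by simp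
  have "top_rank n k T = foldl (\<lambda>f c. f(c := G f c)) (\<lambda>_. 0) [2..<n + 1]"
    unfolding top_rank_def G_def ..
  also have "\<dots> = foldl (\<lambda>f c. f(c := G f c)) (\<lambda>_. 0) [Suc j..<n + 1]"
    unfolding split foldl_append prefix ..
  finally show "c \<le> j \<Longrightarrow> top_rank n k T c = 0"
    by (simp add: foldl_fun_upd_notin)
qed

lemma pos_of_fillT_leading:
  assumes "a \<in> Dk n k" and "n \<ge> 1" and "k \<ge> 1"
    and "first_W_at a k j" and "1 \<le> j" and "j \<le> n"
    and "1 \<le> c" and "c \<le> j"
  shows "pos_of n k (fillT n k a) c = (c, 1)"
  unfolding pos_of_def
proof (rule the_equality)
  note entries = fillT_leading_entries[OF assms(1-6)]
  show "(c, 1) \<in> boxes n k \<and> fillT n k a (fst (c, 1)) (snd (c, 1)) = c"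
    using entries(1) assms(6-8) by (simp add: boxes_def)
  fix b
  assume "b \<in> boxes n k \<and> fillT n k a (fst b) (snd b) = c"
  moreover obtain c' r' where "b = (c', r')"
    by fastforce
  ultimately have b: "(c', r') \<in> boxes n k" "fillT n k a c' r' = c"
    by auto
  then have "(c', r') \<noteq> (1, 2)" and "\<not> Suc j < fillT n k a c' r'"
    using entries(2) assms(8) by auto
  then have "r' = 1 \<and> c' \<le> j"
    using entries(3) b(1) by blast
  then show "b = (c, 1)"
    using entries(1) b \<open>b = (c', r')\<close> by (auto simp: boxes_def)
qed

lemma fillT_1_2_least_rank1:
  assumes "a \<in> Dk n k" and "n \<ge> 1" and "k \<ge> 1"
    and "b \<in> boxes n k" and "rankR n k (fillT n k a) b = 1" and "b \<noteq> (1, 2)"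
  shows "idx (fillT n k a) (1, 2) < idx (fillT n k a) b"
proof -
  obtain j where j: "first_W_at a k j" "1 \<le> j" "j \<le> n"
    using Dk_first_W[OF assms(1-3)] .
  note entries = fillT_leading_entries[OF assms(1-3) j]
  have "top_rank n k (fillT n k a) c = 0" if "c \<le> j" for c
    using top_rank_first_row[OF j(2,3)] entries(1) pos_of_fillT_leading[OF assms(1-3) j] that
    by blast
  moreover obtain c r where b: "b = (c, r)"
    by fastforce
  ultimately have "\<not> (r = 1 \<and> c \<le> j)"
    using assms(5) unfolding rankR_def by auto
  then show ?thesis
    using entries(2,3) assms(4,6) unfolding b idx_def by simp
qed

theorem mainTheorem8:
  fixes n k :: nat and a :: "int list"
  assumes "n \<ge> 1" and "k \<ge> 1" and "a \<in> Dk n k"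
  shows "walk_next n k (fillT n k a) (last (walk n k (fillT n k a))) (set (walk n k (fillT n k a))) = None
         \<and> last (walk n k (fillT n k a)) = smallest_rank1 n k (fillT n k a)"
proof -
  note least = fillT_1_2_least_rank1[OF assms(3,1,2)]
  show ?thesis
    using walk_inv_and_stuck(2)[OF assms(1), of k "fillT n k a"]
      last_walk_eq_1_2[OF assms(1,2) least] smallest_rank1_eq_1_2[OF assms(1,2) least]
    by simp
qed

end
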